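(* For all $1\le i,j\le 7$, \[ \max_{X}\Big\{\sum_{p=(x,y)\in X}W^{i,j}(x,y)\Big\}=\max_{X}\Big\{\sum_{p=(x,y)\in X}W^{j,i}(x,y)\Big\}, \] where each maximum ranges over all finite multisets $X$ of rectangles $p=(x,y)$ (width $x\in(0,1]$, height $y\in(0,1]$) that can be packed without overlap, axis-parallel and without rotation, into a single $1\times1$ square.
   Context: Harmonic weighting function (for a fixed integer parameter $k\ge2$): $W_H(x)=1/i$ if $\frac1{i+1}<x\le\frac1i$ with $1\le i<k$, and $W_H(x)=\frac{k}{k-1}x$ if $0<x\le\frac1k$. $SH+$ is the instance of the Super Harmonic algorithm with $k=50$, $K=6$, $\Delta_1,\dots,\Delta_6=0.294,0.343,0.353,0.375,0.4,0.42$, $t_{51}=\epsilon=1/38$, and for types $i$ the values $(t_i,\alpha_i,\beta_i,\phi(i),\gamma_i)$: 1:$(1,0,1,0,0)$; 2:$(0.706,0,1,1,0)$; 3:$(0.657,0,1,2,0)$; 4:$(0.647,0,1,3,0)$; 5:$(0.625,0,1,4,0)$; 6:$(0.6,0,1,5,0)$; 7:$(0.58,0,1,6,0)$; 8:$(0.5,0,2,0,0)$; 9:$(0.42,0.162,2,0,1)$; 10:$(0.4,0.192,2,0,1)$; 11:$(0.375,0.2346,2,0,1)$; 12:$(0.353,0.3004,2,1,1)$; 13:$(0.343,0.3077,2,1,1)$; 14:$(1/3,0,3,0,0)$; 15:$(0.294,0.0816,3,0,1)$; 16:$(1/4,0.186,4,0,1)$; 17:$(1/5,0.092,5,0,1)$;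 18:$(1/6,0.1456,6,0,1)$; 19:$(0.147,0.2162,6,0,2)$; 20:$(1/7,0.1525,7,0,2)$; for $21\le i\le49$: $(1/(i-13),\ 1.35(50-i)/(37(i-12)),\ i-13,\ 0,\ \lfloor 0.294/t_i\rfloor)$; 50:$(1/37,0,37,0,0)$. Type-$i$ items are those of size in $I_i=(t_{i+1},t_i]$, and $\varphi(i)=\min\{j:t_i\le\Delta_j,1\le j\le 6\}$ ($\varphi(i)=0$ if $t_i>\Delta_6$). Weighting functions $W_B^1,\dots,W_B^7$ of $SH+$ (here $K=6$): with the convention that $\alpha_i/\gamma_i$ terms are $0$ when $\gamma_i=0$, for $x\in I_{51}=(0,1/38]$, $W_B^m(x)=x/(1-1/38)$; for $x\in I_i$, $1\le i\le 50$: $W_B^1(x)=\frac{1-\alpha_i}{\beta_i}$; for $2\le j\le 6$, $W_B^{8-j}(x)$ equals $\frac{1-\alpha_i}{\beta_i}+\frac{\alpha_i}{2\gamma_i}$ if $\phi(i)<j,\varphi(i)<j$; $\frac{1-\alpha_i}{\beta_i}+\frac{\alpha_i}{\gamma_i}$ if $\phi(i)<j,\varphi(i)\ge j$; $\frac{1-\alpha_i}{2\beta_i}+\frac{\alpha_i}{\gamma_i}$ if $\phi(i)\ge j,\varphi(i)\ge j$; $\frac{1-\alpha_i}{2\beta_i}+\frac{\alpha_i}{2\gamma_i}$ if $\phi(i)\ge j,\varphi(i)<j$; and $W_B^{7}(x)$ equals $\frac{1-\alpha_i}{\beta_i}$ if $\phi(i)=\varphi(i)=0$; $\frac{1-\alpha_i}{\beta_i}+\frac{\alpha_i}{\gamma_i}$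 if $\phi(i)=0,\varphi(i)>0$; $0$ if $\phi(i)>0,\varphi(i)=0$; $\frac{\alpha_i}{\gamma_i}$ if $\phi(i)>0,\varphi(i)>0$. For $1\le i,j\le7$ and $x,y\in(0,1]$: $W^{i,j}(x,y)=\frac{W_H(x)W_B^i(y)+W_B^j(x)W_H(y)}{2}$. *)

theory Defs
  imports "HOL-Analysis.Analysis" "HOL-Library.Multiset"
begin

definition WH :: "nat \<Rightarrow> real \<Rightarrow> real" where
  "WH k x =
    (if 0 < x \<and> x \<le> 1 / real k then real k / (real k - 1) * x
     else if (\<exists>i::nat. 1 \<le> i \<and> i < k \<and> 1 / real (i+1) < x \<and> x \<le> 1 / real i)
     then 1 / real (THE i::nat. 1 \<le> i \<and> i < k \<and> 1 / real (i+1) < x \<and> x \<le> 1 / real i)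
     else 0)"

definition Delta :: "nat \<Rightarrow> real" where
  "Delta j = (if j = 1 then 0.294 else if j = 2 then 0.343 else if j = 3 then 0.353
     else if j = 4 then 0.375 else if j = 5 then 0.4 else if j = 6 then 0.42 else 0)"

text \<open>Thresholds t_i, i = 1..51; we set t_52 = 0 so that I_51 = (0, 1/38].\<close>
definition tt :: "nat \<Rightarrow> real" where
  "tt i = (if i = 1 then 1 else if i = 2 then 0.706 else if i = 3 then 0.657
     else if i = 4 then 0.647 else if i = 5 then 0.625 else if i = 6 then 0.6
     else if i = 7 then 0.58 else if i = 8 then 0.5 else if i = 9 then 0.42
     else if i = 10 then 0.4 else if i = 11 then 0.375 else if i = 12 then 0.353
     else if i = 13 then 0.343 else if i = 14 then 1/3 else if i = 15 then 0.294
     else if i = 16 then 1/4 else if i = 17 then 1/5 else if i = 18 then 1/6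
     else if i = 19 then 0.147 else if i = 20 then 1/7
     else if 21 \<le> i \<and> i \<le> 49 then 1 / (real i - 13)
     else if i = 50 then 1/37 else if i = 51 then 1/38 else 0)"

definition alpha :: "nat \<Rightarrow> real" where
  "alpha i = (if i = 9 then 0.162 else if i = 10 then 0.192 else if i = 11 then 0.2346
     else if i = 12 then 0.3004 else if i = 13 then 0.3077 else if i = 15 then 0.0816
     else if i = 16 then 0.186 else if i = 17 then 0.092 else if i = 18 then 0.1456
     else if i = 19 then 0.2162 else if i = 20 then 0.1525
     else if 21 \<le> i \<and> i \<le> 49 then 1.35 * (50 - real i) / (37 * (real i - 12))
     else 0)"

definition beta :: "nat \<Rightarrow> real" where
  "beta i = (if 1 \<le> i \<and> i \<le> 7 then 1 else if 8 \<le> i \<and> i \<le> 13 then 2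
     else if i = 14 \<or> i = 15 then 3 else if i = 16 then 4 else if i = 17 then 5
     else if i = 18 \<or> i = 19 then 6 else if i = 20 then 7
     else if 21 \<le> i \<and> i \<le> 49 then real i - 13 else if i = 50 then 37 else 0)"

definition phi :: "nat \<Rightarrow> nat" where
  "phi i = (if 2 \<le> i \<and> i \<le> 7 then i - 1 else if i = 12 \<or> i = 13 then 1 else 0)"

definition gamma :: "nat \<Rightarrow> real" where
  "gamma i = (if 9 \<le> i \<and> i \<le> 13 then 1 else if 15 \<le> i \<and> i \<le> 18 then 1
     else if i = 19 \<or> i = 20 then 2
     else if 21 \<le> i \<and> i \<le> 49 then of_int \<lfloor>0.294 / tt i\<rfloor> else 0)"

definition varphi :: "nat \<Rightarrow> nat" where
  "varphi i = (if tt i > Delta 6 then 0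
     else (LEAST j::nat. 1 \<le> j \<and> j \<le> 6 \<and> tt i \<le> Delta j))"

definition qt :: "real \<Rightarrow> real \<Rightarrow> real" where
  "qt a g = (if g = 0 then 0 else a / g)"

definition itype :: "real \<Rightarrow> nat" where
  "itype x = (THE i::nat. 1 \<le> i \<and> i \<le> 51 \<and> tt (i+1) < x \<and> x \<le> tt i)"

definition WB :: "nat \<Rightarrow> real \<Rightarrow> real" where
  "WB m x =
    (if 0 < x \<and> x \<le> 1/38 then x / (1 - 1/38)
     else (let i = itype x; a = alpha i; b = beta i; g = gamma i;
               p = phi i; v = varphi i in
       if m = 1 then (1 - a) / b
       else if 2 \<le> m \<and> m \<le> 6 then
         (let j = 8 - m in
           if p < j \<and> v < j then (1 - a) / b + qt a (2 * g)
           else if p < j \<and> v \<ge> j then (1 - a) / b + qt a g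
           else if p \<ge> j \<and> v \<ge> j then (1 - a) / (2 * b) + qt a g
           else (1 - a) / (2 * b) + qt a (2 * g))
       else if m = 7 then
         (if p = 0 \<and> v = 0 then (1 - a) / b
          else if p = 0 \<and> v > 0 then (1 - a) / b + qt a g
          else if p > 0 \<and> v = 0 then 0
          else qt a g)
       else 0))"

definition W :: "nat \<Rightarrow> nat \<Rightarrow> real \<Rightarrow> real \<Rightarrow> real" where
  "W i j x y = (WH 50 x * WB i y + WB j x * WH 50 y) / 2"

definition rect :: "real \<times> real \<Rightarrow> real \<times> real \<Rightarrow> (real \<times> real) set" where
  "rect pos r = {fst pos .. fst pos + fst r} \<times> {snd pos .. snd pos + snd r}"

definition packable :: "(real \<times> real) multiset \<Rightarrow> bool" where
  "packable X \<longleftrightarrow>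
     (\<forall>r \<in># X. 0 < fst r \<and> fst r \<le> 1 \<and> 0 < snd r \<and> snd r \<le> 1) \<and>
     (\<exists>rs pos. mset rs = X \<and> length pos = length rs \<and>
        (\<forall>k < length rs. rect (pos ! k) (rs ! k) \<subseteq> {0..1} \<times> {0..1}) \<and>
        (\<forall>k l. k < length rs \<longrightarrow> l < length rs \<longrightarrow> k \<noteq> l \<longrightarrow>
            interior (rect (pos ! k) (rs ! k)) \<inter> interior (rect (pos ! l) (rs ! l)) = {}))"

end

theory Submission
  imports Defs
begin

text \<open>Reflecting the unit square in its diagonal turns a packing of rectangles of sizes
  \<open>(x, y)\<close> into a packing of rectangles of sizes \<open>(y, x)\<close>, and \<open>W i j x y = W j i y x\<close>.
  So both suprema range over the same set of values.\<close>

lemma rect_swap: "rect (prod.swap p) (prod.swap r) = prod.swap ` rect p r"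
  by (simp add: rect_def product_swap)

lemma interior_rect_swap:
  "interior (rect (prod.swap p) (prod.swap r)) = prod.swap ` interior (rect p r)"
  by (simp add: rect_def interior_Times product_swap)

lemma packable_image_swap:
  assumes "packable X"
  shows "packable (image_mset prod.swap X)"
proof -
  from assms obtain rs pos where
    sizes: "\<forall>r \<in># X. 0 < fst r \<and> fst r \<le> 1 \<and> 0 < snd r \<and> snd r \<le> 1" and
    rs: "mset rs = X" and len: "length pos = length rs" and
    inside: "\<forall>k < length rs. rect (pos ! k) (rs ! k) \<subseteq> {0..1} \<times> {0..1}" and
    disjoint: "\<forall>k l. k < length rs \<longrightarrow> l < length rs \<longrightarrow> k \<noteq> l \<longrightarrow>
      interior (rect (pos ! k) (rs ! k)) \<inter> interior (rect (pos ! l) (rs ! l)) = {}"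
    unfolding packable_def by blast
  define rs' where "rs' = map prod.swap rs"
  define pos' where "pos' = map prod.swap pos"
  have rect': "rect (pos' ! k) (rs' ! k) = prod.swap ` rect (pos ! k) (rs ! k)"
    if "k < length rs" for k
    using that len by (simp add: rs'_def pos'_def rect_swap)
  have interior': "interior (rect (pos' ! k) (rs' ! k)) = prod.swap ` interior (rect (pos ! k) (rs ! k))"
    if "k < length rs" for k
    using that len by (simp add: rs'_def pos'_def interior_rect_swap)
  have len': "length rs' = length rs"
    by (simp add: rs'_def)
  have "rect (pos' ! k) (rs' ! k) \<subseteq> {0..1} \<times> {0..1}" if "k < length rs'" for k
  proof -
    have "prod.swap ` rect (pos ! k) (rs ! k) \<subseteq> prod.swap ` ({0..1} \<times> {0..1})"
      using inside that len' by (simp add: image_mono)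
    then show ?thesis
      using that len' rect' by (simp add: product_swap)
  qed
  moreover have "interior (rect (pos' ! k) (rs' ! k)) \<inter> interior (rect (pos' ! l) (rs' ! l)) = {}"
    if "k < length rs'" "l < length rs'" "k \<noteq> l" for k l
  proof -
    have "interior (rect (pos ! k) (rs ! k)) \<inter> interior (rect (pos ! l) (rs ! l)) = {}"
      using disjoint that len' by simp
    then show ?thesis
      using that len' by (simp add: interior' flip: image_Int[OF inj_swap])
  qed
  moreover have "mset rs' = image_mset prod.swap X" "length pos' = length rs'"
    using rs len by (simp_all add: rs'_def pos'_def)
  moreover have "\<forall>r \<in># image_mset prod.swap X. 0 < fst r \<and> fst r \<le> 1 \<and> 0 < snd r \<and> snd r \<le> 1"
    using sizes by auto
  ultimately show ?thesis
    unfolding packable_def by blast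
qed

lemma W_swap: "W i j x y = W j i y x"
  by (simp add: W_def add.commute mult.commute)

lemma sum_W_image_swap:
  "(\<Sum>\<^sub># (image_mset (\<lambda>(x, y). W i j x y) (image_mset prod.swap X)))
     = (\<Sum>\<^sub># (image_mset (\<lambda>(x, y). W j i x y) X))"
  by (simp add: multiset.map_comp comp_def split_def W_swap[of i j])

theorem lemma3:
  fixes i j :: nat
  assumes "1 \<le> i" "i \<le> 7" "1 \<le> j" "j \<le> 7"
  shows "(SUP X \<in> {X. packable X}. \<Sum>\<^sub># (image_mset (\<lambda>(x, y). W i j x y) X))
       = (SUP X \<in> {X. packable X}. \<Sum>\<^sub># (image_mset (\<lambda>(x, y). W j i x y) X))"
proof -
  let ?P = "{X. packable X}"
  let ?F = "\<lambda>a b X. \<Sum>\<^sub># (image_mset (\<lambda>(x, y). W a b x y) X)"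
  have "?F a b ` ?P \<subseteq> ?F b a ` ?P" for a b
  proof
    fix v assume "v \<in> ?F a b ` ?P"
    then obtain X where X: "packable X" "v = ?F a b X" by auto
    have "v = ?F b a (image_mset prod.swap X)"
      using X(2) sum_W_image_swap[of b a X] by simp
    with packable_image_swap[OF X(1)] show "v \<in> ?F b a ` ?P" by blast
  qed
  then have "?F i j ` ?P = ?F j i ` ?P" by blast
  then show ?thesis by simp
qed

end
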